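(* Let $H$ be a numerical semigroup, $k$ a field, and $R=k[H]$ Gorenstein, with $c=\mathrm{c}(H)$. Let $\mathcal{X}_R$ be the set of graded ideals $I$ of $R$ with $R/I$ Gorenstein and $\mu_R(I)\ge 2$, and for an $R$-module $M$ let $[M]$ denote its isomorphism class as an $R$-module. Then $$\{[I]\mid I\in\mathcal{X}_R\}=\{[R:_Rt^m]\mid m\in\mathbb{N}\setminus H\}\quad\text{and}\quad \#\{[I]\mid I\in\mathcal{X}_R\}=\frac{c}{2}.$$
   Context: $R=k[H]=k[t^h\mid h\in H]\subseteq k[t]$ graded by $\deg t=1$; $R:_Rt^m=\{x\in R\mid xt^m\in R\}$; $\mathrm{c}(H)=\min\{n\mid m\in H\ \forall m\ge n\}$ is the conductor of $H$. *)

theory Defs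
  imports "HOL-Computational_Algebra.Polynomial"
begin

definition numerical_semigroup :: "nat set \<Rightarrow> bool" where
  "numerical_semigroup H \<longleftrightarrow> 0 \<in> H \<and> (\<forall>a\<in>H. \<forall>b\<in>H. a + b \<in> H) \<and> finite (UNIV - H)"

definition conductor :: "nat set \<Rightarrow> nat" where
  "conductor H = (LEAST n. \<forall>m\<ge>n. m \<in> H)"

(* R = k[H] = k[t^h | h \<in> H] inside k[t] *)
definition sgring :: "nat set \<Rightarrow> 'a::field poly set" where
  "sgring H = {p. \<forall>n. coeff p n \<noteq> 0 \<longrightarrow> n \<in> H}"

definition is_Rsubmodule :: "nat set \<Rightarrow> 'a::field poly set \<Rightarrow> bool" where
  "is_Rsubmodule H M \<longleftrightarrow> 0 \<in> M \<and> (\<forall>x\<in>M. \<forall>y\<in>M. x + y \<in> M)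
     \<and> (\<forall>r\<in>sgring H. \<forall>x\<in>M. r * x \<in> M)"

definition is_ideal :: "nat set \<Rightarrow> 'a::field poly set \<Rightarrow> bool" where
  "is_ideal H I \<longleftrightarrow> I \<subseteq> sgring H \<and> is_Rsubmodule H I"

(* graded ideal (deg t = 1): closed under taking homogeneous components *)
definition graded_ideal :: "nat set \<Rightarrow> 'a::field poly set \<Rightarrow> bool" where
  "graded_ideal H I \<longleftrightarrow> is_ideal H I \<and> (\<forall>x\<in>I. \<forall>n. monom (coeff x n) n \<in> I)"

definition homog_max :: "nat set \<Rightarrow> 'a::field poly set" where
  "homog_max H = {p \<in> sgring H. coeff p 0 = 0}"

definition colon :: "nat set \<Rightarrow> 'a::field poly set \<Rightarrow> 'a poly set \<Rightarrow> 'a poly set" where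
  "colon H I J = {x \<in> sgring H. \<forall>y\<in>J. x * y \<in> I}"

definition quot_dim_one :: "'a::field poly set \<Rightarrow> 'a poly set \<Rightarrow> bool" where
  "quot_dim_one J I \<longleftrightarrow> (\<exists>s\<in>J. s \<notin> I \<and> (\<forall>x\<in>J. \<exists>a. x - smult a s \<in> I))"

(* R/I Gorenstein, for I with R/I Artinian local with maximal ideal m/I:
   the socle (I :_R m)/I of R/I is one-dimensional over k = R/m *)
definition gorenstein_quot :: "nat set \<Rightarrow> 'a::field poly set \<Rightarrow> bool" where
  "gorenstein_quot H I \<longleftrightarrow> quot_dim_one (colon H I (homog_max H)) I"

definition principal_ideal :: "nat set \<Rightarrow> 'a::field poly \<Rightarrow> 'a poly set" where
  "principal_ideal H x = {r * x | r. r \<in> sgring H}"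

(* R = k[H] Gorenstein: R/t^h R is Gorenstein (Artinian) for some h \<in> H, h > 0
   (t^h a homogeneous nonzerodivisor in m) *)
definition gorenstein_sgring :: "'a::field itself \<Rightarrow> nat set \<Rightarrow> bool" where
  "gorenstein_sgring (_::'a itself) H \<longleftrightarrow>
     (\<exists>h\<in>H. h > 0 \<and> gorenstein_quot H (principal_ideal H (monom (1::'a) h)))"

definition mu :: "nat set \<Rightarrow> 'a::field poly set \<Rightarrow> nat" where
  "mu H I = (LEAST n. \<exists>gs. length gs = n \<and>
     I = {\<Sum>i<n. r i * gs ! i | r. \<forall>i<n. r i \<in> sgring H})"

definition colon_monom :: "nat set \<Rightarrow> nat \<Rightarrow> 'a::field poly set" where
  "colon_monom H m = {x \<in> sgring H. x * monom 1 m \<in> sgring H}"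

definition module_iso :: "nat set \<Rightarrow> 'a::field poly set \<Rightarrow> 'a poly set \<Rightarrow> bool" where
  "module_iso H M N \<longleftrightarrow> (\<exists>f. bij_betw f M N \<and> (\<forall>x\<in>M. \<forall>y\<in>M. f (x + y) = f x + f y)
      \<and> (\<forall>r\<in>sgring H. \<forall>x\<in>M. f (r * x) = r * f x))"

(* isomorphism class [M], represented by the R-submodules of k[t] isomorphic to M *)
definition iso_class :: "nat set \<Rightarrow> 'a::field poly set \<Rightarrow> 'a poly set set" where
  "iso_class H M = {N. is_Rsubmodule H N \<and> module_iso H M N}"

definition X_R :: "nat set \<Rightarrow> 'a::field poly set set" where
  "X_R H = {I. graded_ideal H I \<and> gorenstein_quot H I \<and> mu H I \<ge> 2}"

end

(*
  A graded ideal I of R = k[H] is spanned by the monomials it contains, so I = k[E] for a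
  semigroup ideal E of H, and everything becomes combinatorics of E: R/I is Gorenstein iff E
  has a unique socle exponent n0 (n0 \<in> H - E with n0 + k \<in> E for all 0 < k \<in> H), and then
  E = H - (n0 - H); mu(I) \<ge> 2 iff E is neither empty nor principal (d + H); and an
  isomorphism of monomial modules is multiplication by a Laurent monomial, i.e. a shift of
  exponent sets.

  Gorensteinness of R makes H symmetric with Frobenius number F. Then H - (n0 - H) is the
  exponent set of R :_R t^(F - n0) if n0 \<le> F and of t^(n0 - F) (R :_R t^(n0 - F)) otherwise,
  non-principality forces the index to be a gap, and different gaps give non-isomorphic colon
  ideals, since all of them have Frobenius number F and a shift would move it. Symmetry pairs
  the gaps with the elements of H below F, so there are (F + 1)/2 = c/2 of them.
*)

theory Submission
  imports Defs
begin

definition supp_polys :: "nat set \<Rightarrow> 'a::zero poly set" where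
  "supp_polys E = {p. \<forall>n. coeff p n \<noteq> 0 \<longrightarrow> n \<in> E}"

lemma sgring_eq_supp_polys: "sgring H = supp_polys H"
  unfolding sgring_def supp_polys_def ..

lemma monom_in_supp_polys_iff: "monom c n \<in> supp_polys E \<longleftrightarrow> c = 0 \<or> n \<in> E"
  unfolding supp_polys_def by auto

lemma zero_in_supp_polys: "0 \<in> supp_polys E"
  unfolding supp_polys_def by simp

lemma add_in_supp_polys:
  "p \<in> supp_polys E \<Longrightarrow> q \<in> supp_polys E \<Longrightarrow> p + q \<in> supp_polys E"
  unfolding supp_polys_def by auto (metis add.right_neutral)

lemma supp_polys_mono: "A \<subseteq> B \<Longrightarrow> supp_polys A \<subseteq> supp_polys B"
  unfolding supp_polys_def by auto

lemma supp_polys_empty: "supp_polys {} = {0}"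
  unfolding supp_polys_def by (auto simp: poly_eq_iff)

lemma mult_in_supp_polys:
  fixes p q :: "'a::comm_semiring_0 poly"
  assumes "\<forall>i\<in>A. \<forall>j\<in>B. i + j \<in> C" "p \<in> supp_polys A" "q \<in> supp_polys B"
  shows "p * q \<in> supp_polys C"
  unfolding supp_polys_def
proof (intro CollectI allI impI)
  fix n assume "coeff (p * q) n \<noteq> 0"
  then obtain i where i: "i \<le> n" "coeff p i * coeff q (n - i) \<noteq> 0"
    unfolding coeff_mult by (auto elim: sum.not_neutral_contains_not_neutral)
  then have "coeff p i \<noteq> 0" "coeff q (n - i) \<noteq> 0" by auto
  then have "i \<in> A" "n - i \<in> B"
    using assms(2,3) unfolding supp_polys_def by auto
  then show "n \<in> C" using assms(1) i(1) by (metis le_add_diff_inverse)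
qed

lemma sum_in_add_closed:
  assumes "0 \<in> M" "\<forall>x\<in>M. \<forall>y\<in>M. x + y \<in> M" "\<forall>i\<in>A. f i \<in> M"
  shows "sum f A \<in> M"
proof (cases "finite A")
  case True
  then show ?thesis using assms(3)
    by (induction A rule: finite_induct) (auto simp: assms(1,2))
qed (simp add: assms(1))

lemma poly_in_add_closed_by_monoms:
  fixes p :: "'a::comm_ring_1 poly"
  assumes "0 \<in> M" "\<forall>x\<in>M. \<forall>y\<in>M. x + y \<in> M"
    and "\<And>n. coeff p n \<noteq> 0 \<Longrightarrow> monom (coeff p n) n \<in> M"
  shows "p \<in> M"
proof -
  have "(\<Sum>i\<le>degree p. monom (coeff p i) i) \<in> M"
    using assms by (intro sum_in_add_closed) (auto, metis monom_eq_0)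
  then show ?thesis by (simp add: poly_as_sum_of_monoms)
qed

lemma mem_image_plus_iff: "n \<in> (+) d ` S \<longleftrightarrow> d \<le> n \<and> n - d \<in> S" for n d :: nat
  by (auto intro: image_eqI[where x = "n - d"])

lemma supp_polys_image_plus:
  "supp_polys ((+) d ` S) = (*) (monom 1 d) ` (supp_polys S :: 'a::comm_ring_1 poly set)"
proof
  show "(*) (monom 1 d) ` supp_polys S \<subseteq> (supp_polys ((+) d ` S) :: 'a poly set)"
    by (auto intro!: mult_in_supp_polys[of "{d}" S] simp: monom_in_supp_polys_iff)
  show "supp_polys ((+) d ` S) \<subseteq> (*) (monom 1 d) ` (supp_polys S :: 'a poly set)"
  proof
    fix p :: "'a poly" assume p: "p \<in> supp_polys ((+) d ` S)"
    then have "monom 1 d dvd p"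
      by (auto simp: monom_1_dvd_iff' supp_polys_def mem_image_plus_iff)
    then obtain y where y: "p = monom 1 d * y" ..
    have "y \<in> supp_polys S"
      unfolding supp_polys_def
    proof (intro CollectI allI impI)
      fix k assume "coeff y k \<noteq> 0"
      then have "coeff p (d + k) \<noteq> 0" by (simp add: y coeff_monom_mult)
      then show "k \<in> S" using p by (auto simp: supp_polys_def mem_image_plus_iff)
    qed
    then show "p \<in> (*) (monom 1 d) ` supp_polys S" using y by blast
  qed
qed

lemma factor_of_monom:
  fixes g :: "'a::idom poly"
  shows "y * g = monom b N \<Longrightarrow> b \<noteq> 0 \<Longrightarrow> \<exists>a d. a \<noteq> 0 \<and> g = monom a d"
proof (induction N arbitrary: y g)
  case 0
  then have "y \<noteq> 0" "g \<noteq> 0" "degree (y * g) = 0" by (auto simp: monom_0)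
  then have "degree g = 0" by (simp add: degree_mult_eq)
  then show ?case using \<open>g \<noteq> 0\<close> by (metis degree_0_id monom_0 pCons_eq_0_iff)
next
  case (Suc N)
  have "coeff (y * g) 0 = 0" using Suc.prems by simp
  then consider "coeff y 0 = 0" | "coeff g 0 = 0" by (auto simp: coeff_mult)
  then show ?case
  proof cases
    case 1
    then obtain y' where "y = pCons 0 y'" by (metis pCons_cases coeff_pCons_0)
    then have "y' * g = monom b N" using Suc.prems by (simp add: monom_Suc)
    then show ?thesis using Suc.IH Suc.prems(2) by blast
  next
    case 2
    then obtain g' where g': "g = pCons 0 g'" by (metis pCons_cases coeff_pCons_0)
    then have "y * g' = monom b N" using Suc.prems by (simp add: monom_Suc)
    then obtain a d where "a \<noteq> 0" "g' = monom a d" using Suc.IH Suc.prems(2) by blast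
    then show ?thesis using g' by (metis monom_Suc)
  qed
qed

definition semigroup_ideal :: "nat set \<Rightarrow> nat set \<Rightarrow> bool" where
  "semigroup_ideal H E \<longleftrightarrow> E \<subseteq> H \<and> (\<forall>e\<in>E. \<forall>h\<in>H. e + h \<in> E)"

definition exponents :: "'a::field poly set \<Rightarrow> nat set" where
  "exponents I = {n. monom 1 n \<in> I}"

lemma const_in_sgring: "0 \<in> H \<Longrightarrow> [:a:] \<in> sgring H"
  unfolding sgring_def by (auto simp: coeff_pCons split: nat.splits)

lemma const_mult_monom: "[:a:] * monom c n = monom (a * c) n"
  by (metis monom_0 mult_monom add_0)

lemma graded_ideal_supp_polys:
  assumes "semigroup_ideal H E"
  shows "graded_ideal H (supp_polys E :: 'a::field poly set)"
proof -
  have "\<forall>i\<in>H. \<forall>j\<in>E. i + j \<in> E"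
    using assms unfolding semigroup_ideal_def by (metis add.commute)
  then have "r * x \<in> supp_polys E" if "r \<in> sgring H" "x \<in> supp_polys E" for r x :: "'a poly"
    using that unfolding sgring_eq_supp_polys by (rule mult_in_supp_polys)
  moreover have "supp_polys E \<subseteq> (sgring H :: 'a poly set)"
    using assms unfolding semigroup_ideal_def sgring_eq_supp_polys by (simp add: supp_polys_mono)
  moreover have "monom (coeff x n) n \<in> supp_polys E" if "x \<in> supp_polys E" for x :: "'a poly" and n
    using that unfolding supp_polys_def by (simp add: coeff_monom)
  ultimately show ?thesis
    unfolding graded_ideal_def is_ideal_def is_Rsubmodule_def
    by (simp add: zero_in_supp_polys add_in_supp_polys)
qed

lemma graded_ideal_eq_supp_polys:
  fixes I :: "'a::field poly set"
  assumes "graded_ideal H I" "0 \<in> H"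
  shows "I = supp_polys (exponents I)"
proof -
  have I: "\<forall>r\<in>sgring H. \<forall>x\<in>I. r * x \<in> I" "0 \<in> I" "\<forall>x\<in>I. \<forall>y\<in>I. x + y \<in> I"
     "\<forall>x\<in>I. \<forall>n. monom (coeff x n) n \<in> I"
    using assms(1) unfolding graded_ideal_def is_ideal_def is_Rsubmodule_def by auto
  have scale: "monom c n \<in> I" if "monom b n \<in> I" "b \<noteq> 0" for b c n
  proof -
    have "[:c / b:] * monom b n \<in> I" using I(1) that(1) const_in_sgring[OF assms(2)] by blast
    then show ?thesis using that(2) by (simp add: const_mult_monom smult_monom)
  qed
  show ?thesis
  proof
    show "I \<subseteq> supp_polys (exponents I)"
    proof
      fix x assume x: "x \<in> I"
      have "n \<in> exponents I" if "coeff x n \<noteq> 0" for n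
        using scale[OF bspec[OF I(4) x, rule_format] that] unfolding exponents_def by simp
      then show "x \<in> supp_polys (exponents I)" unfolding supp_polys_def by blast
    qed
    show "supp_polys (exponents I) \<subseteq> I"
    proof
      fix p :: "'a poly" assume p: "p \<in> supp_polys (exponents I)"
      show "p \<in> I"
      proof (rule poly_in_add_closed_by_monoms[OF I(2,3)])
        fix n assume "coeff p n \<noteq> 0"
        with p have "monom 1 n \<in> I" unfolding supp_polys_def exponents_def by blast
        then show "monom (coeff p n) n \<in> I" by (rule scale) simp
      qed
    qed
  qed
qed

lemma semigroup_ideal_exponents:
  fixes I :: "'a::field poly set"
  assumes "graded_ideal H I"
  shows "semigroup_ideal H (exponents I)"
proof -
  have I: "I \<subseteq> sgring H" "\<forall>r\<in>sgring H. \<forall>x\<in>I. r * x \<in> I"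
    using assms unfolding graded_ideal_def is_ideal_def is_Rsubmodule_def by auto
  have "monom 1 h * monom 1 e \<in> I" if "monom 1 e \<in> I" "h \<in> H" for e h
    using I(2) that by (auto simp: sgring_eq_supp_polys monom_in_supp_polys_iff)
  then show ?thesis
    using I(1) unfolding semigroup_ideal_def exponents_def sgring_eq_supp_polys
    by (auto simp: monom_in_supp_polys_iff mult_monom add.commute)
qed


definition socle_exp :: "nat set \<Rightarrow> nat set \<Rightarrow> nat \<Rightarrow> bool" where
  "socle_exp H E n \<longleftrightarrow> n \<in> H \<and> n \<notin> E \<and> (\<forall>k\<in>H. 0 < k \<longrightarrow> n + k \<in> E)"

lemma colon_homog_max_supp_polys:
  assumes "E \<subseteq> H"
  shows "colon H (supp_polys E) (homog_max H)
    = (supp_polys {n\<in>H. \<forall>k\<in>H. 0 < k \<longrightarrow> n + k \<in> E} :: 'a::field poly set)"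
proof
  show "colon H (supp_polys E) (homog_max H)
    \<subseteq> (supp_polys {n\<in>H. \<forall>k\<in>H. 0 < k \<longrightarrow> n + k \<in> E} :: 'a poly set)"
  proof
    fix x :: "'a poly" assume x: "x \<in> colon H (supp_polys E) (homog_max H)"
    show "x \<in> supp_polys {n\<in>H. \<forall>k\<in>H. 0 < k \<longrightarrow> n + k \<in> E}"
      unfolding supp_polys_def
    proof (rule CollectI, intro allI impI)
      fix n assume c: "coeff x n \<noteq> 0"
      have "n + k \<in> E" if "k \<in> H" "0 < k" for k
      proof -
        have "monom 1 k \<in> homog_max H"
          using that unfolding homog_max_def sgring_def by (simp add: coeff_monom)
        then have "x * monom 1 k \<in> supp_polys E"
          using x unfolding colon_def by blast
        moreover have "coeff (x * monom 1 k) (n + k) \<noteq> 0"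
          using c by (simp add: coeff_monom_mult mult.commute[of x])
        ultimately show "n + k \<in> E" unfolding supp_polys_def by blast
      qed
      moreover have "n \<in> H" using x c unfolding colon_def sgring_def by blast
      ultimately show "n \<in> {n\<in>H. \<forall>k\<in>H. 0 < k \<longrightarrow> n + k \<in> E}" by blast
    qed
  qed
  show "(supp_polys {n\<in>H. \<forall>k\<in>H. 0 < k \<longrightarrow> n + k \<in> E} :: 'a poly set)
    \<subseteq> colon H (supp_polys E) (homog_max H)"
  proof
    fix x :: "'a poly" assume x: "x \<in> supp_polys {n\<in>H. \<forall>k\<in>H. 0 < k \<longrightarrow> n + k \<in> E}"
    have "homog_max H \<subseteq> (supp_polys {k\<in>H. 0 < k} :: 'a poly set)"
      unfolding homog_max_def sgring_def supp_polys_def by (auto intro: gr0I)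
    moreover have "\<forall>i\<in>{n\<in>H. \<forall>k\<in>H. 0 < k \<longrightarrow> n + k \<in> E}. \<forall>j\<in>{k\<in>H. 0 < k}. i + j \<in> E"
      by blast
    ultimately have "x * y \<in> supp_polys E" if "y \<in> homog_max H" for y
      using that x mult_in_supp_polys by blast
    moreover have "x \<in> sgring H"
      using x supp_polys_mono[of "{n\<in>H. \<forall>k\<in>H. 0 < k \<longrightarrow> n + k \<in> E}" H]
      unfolding sgring_eq_supp_polys by blast
    ultimately show "x \<in> colon H (supp_polys E) (homog_max H)" unfolding colon_def by blast
  qed
qed

lemma quot_dim_one_supp_polys_iff:
  "quot_dim_one (supp_polys S :: 'a::field poly set) (supp_polys E) \<longleftrightarrow> (\<exists>!n. n \<in> S \<and> n \<notin> E)"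
proof
  assume "quot_dim_one (supp_polys S :: 'a poly set) (supp_polys E)"
  then obtain s :: "'a poly" where s: "s \<in> supp_polys S" "s \<notin> supp_polys E"
    and span: "\<And>x. x \<in> supp_polys S \<Longrightarrow> \<exists>a. x - smult a s \<in> supp_polys E"
    unfolding quot_dim_one_def by blast
  then obtain n0 where n0: "coeff s n0 \<noteq> 0" "n0 \<notin> E" "n0 \<in> S"
    unfolding supp_polys_def by blast
  have "n1 = n0" if n1: "n1 \<in> S" "n1 \<notin> E" for n1
  proof (rule ccontr)
    assume ne: "n1 \<noteq> n0"
    have "monom 1 n1 \<in> (supp_polys S :: 'a poly set)"
      using n1(1) by (simp add: monom_in_supp_polys_iff)
    then obtain a where "monom 1 n1 - smult a s \<in> supp_polys E" using span by blast
    then have "coeff (monom 1 n1 - smult a s) n0 = 0" "coeff (monom 1 n1 - smult a s) n1 = 0"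
      using n0(2) n1(2) unfolding supp_polys_def by blast+
    then show False using ne n0(1) by simp
  qed
  then show "\<exists>!n. n \<in> S \<and> n \<notin> E" using n0(2,3) by blast
next
  assume "\<exists>!n. n \<in> S \<and> n \<notin> E"
  then obtain n0 where n0: "n0 \<in> S" "n0 \<notin> E" "\<And>n. n \<in> S \<Longrightarrow> n \<notin> E \<Longrightarrow> n = n0"
    by blast
  have "x - smult (coeff x n0) (monom 1 n0) \<in> supp_polys E" if x: "x \<in> supp_polys S" for x :: "'a poly"
    unfolding supp_polys_def
  proof (rule CollectI, intro allI impI)
    fix n assume c: "coeff (x - smult (coeff x n0) (monom 1 n0)) n \<noteq> 0"
    then have "n \<noteq> n0" by auto
    with c have "coeff x n \<noteq> 0" by simp
    then show "n \<in> E" using x n0(3) \<open>n \<noteq> n0\<close> unfolding supp_polys_def by blast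
  qed
  moreover have "monom 1 n0 \<in> (supp_polys S :: 'a poly set)" "monom 1 n0 \<notin> (supp_polys E :: 'a poly set)"
    using n0(1,2) by (simp_all add: monom_in_supp_polys_iff)
  ultimately show "quot_dim_one (supp_polys S :: 'a poly set) (supp_polys E)"
    unfolding quot_dim_one_def by blast
qed

lemma gorenstein_quot_supp_polys_iff:
  assumes "E \<subseteq> H"
  shows "gorenstein_quot H (supp_polys E :: 'a::field poly set) \<longleftrightarrow> (\<exists>!n. socle_exp H E n)"
proof -
  have "n \<in> {n\<in>H. \<forall>k\<in>H. 0 < k \<longrightarrow> n + k \<in> E} \<and> n \<notin> E \<longleftrightarrow> socle_exp H E n" for n
    unfolding socle_exp_def by blast
  then show ?thesis
    unfolding gorenstein_quot_def colon_homog_max_supp_polys[OF assms] quot_dim_one_supp_polys_iff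
    by presburger
qed

lemma numerical_semigroup_zero: "numerical_semigroup H \<Longrightarrow> 0 \<in> H"
  unfolding numerical_semigroup_def by auto

lemma numerical_semigroup_add:
  "numerical_semigroup H \<Longrightarrow> a \<in> H \<Longrightarrow> b \<in> H \<Longrightarrow> a + b \<in> H"
  unfolding numerical_semigroup_def by auto

lemma numerical_semigroup_mult: "numerical_semigroup H \<Longrightarrow> a \<in> H \<Longrightarrow> k * a \<in> H"
  by (induction k) (auto simp: numerical_semigroup_zero numerical_semigroup_add)

lemma numerical_semigroup_cofinite:
  assumes "numerical_semigroup H"
  shows "\<exists>N. \<forall>n\<ge>N. n \<in> H"
proof -
  have "finite (UNIV - H)" using assms unfolding numerical_semigroup_def by auto
  then obtain N where "\<forall>n\<in>UNIV - H. n < N" using finite_nat_set_iff_bounded by blast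
  then show ?thesis by (meson DiffI UNIV_I not_le)
qed

lemma semigroup_ideal_cofinite:
  assumes "numerical_semigroup H" "semigroup_ideal H E" "e \<in> E"
  shows "\<exists>N. \<forall>n\<ge>N. n \<in> E"
proof -
  obtain N where N: "\<forall>n\<ge>N. n \<in> H" using numerical_semigroup_cofinite[OF assms(1)] by blast
  have "n \<in> E" if "e + N \<le> n" for n
  proof -
    have "n - e \<in> H" using N that by auto
    then have "e + (n - e) \<in> E" using assms(2,3) unfolding semigroup_ideal_def by blast
    then show ?thesis using that by simp
  qed
  then show ?thesis by blast
qed

lemma semigroup_ideal_image_plus:
  assumes "numerical_semigroup H" "d \<in> H"
  shows "semigroup_ideal H ((+) d ` H)"
  using assms unfolding semigroup_ideal_def
  by (auto simp: add.assoc intro!: imageI numerical_semigroup_add)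

lemma principal_ideal_monom:
  "principal_ideal H (monom 1 h) = (supp_polys ((+) h ` H) :: 'a::field poly set)"
  unfolding principal_ideal_def supp_polys_image_plus sgring_eq_supp_polys
  by (auto simp: mult.commute)

text \<open>Every element of \<open>H\<close> outside an ideal divides the unique socle element: walking up from
  \<open>n\<close> inside \<open>H - E\<close> as far as possible lands in the socle.\<close>

lemma below_socle_exp:
  assumes NS: "numerical_semigroup H" and N: "\<forall>j\<ge>N. j \<in> E"
    and socle: "socle_exp H E n0" "\<And>n. socle_exp H E n \<Longrightarrow> n = n0"
    and n: "n \<in> H" "n \<notin> E"
  shows "n \<le> n0 \<and> n0 - n \<in> H"
proof -
  define B where "B = {b\<in>H. n + b \<notin> E}"
  have "b < N" if "b \<in> B" for b
    using that N[rule_format, of "n + b"] unfolding B_def by (metis (mono_tags) mem_Collect_eq not_le trans_le_add2)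
  then have "finite B" by (meson finite_nat_set_iff_bounded)
  moreover have "0 \<in> B" unfolding B_def using n numerical_semigroup_zero[OF NS] by simp
  ultimately have bm: "Max B \<in> B" "\<And>b. b \<in> B \<Longrightarrow> b \<le> Max B"
    using Max_in Max_ge by blast+
  have "socle_exp H E (n + Max B)"
    unfolding socle_exp_def
  proof (intro conjI ballI impI)
    show "n + Max B \<in> H" "n + Max B \<notin> E"
      using bm n NS unfolding B_def by (auto simp: numerical_semigroup_add)
    fix k assume k: "k \<in> H" "0 < k"
    show "n + Max B + k \<in> E"
    proof (rule ccontr)
      assume "n + Max B + k \<notin> E"
      then have "Max B + k \<in> B"
        using bm(1) k NS unfolding B_def by (simp add: numerical_semigroup_add add.assoc)
      then show False using bm(2) k(2) by fastforce
    qed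
  qed
  then have "n + Max B = n0" by (rule socle(2))
  then show ?thesis using bm(1) unfolding B_def by auto
qed

lemma semigroup_ideal_eq_socle_complement:
  assumes NS: "numerical_semigroup H" and E: "semigroup_ideal H E" "E \<noteq> {}"
    and socle: "socle_exp H E n0" "\<And>n. socle_exp H E n \<Longrightarrow> n = n0"
  shows "E = {n\<in>H. \<not> (n \<le> n0 \<and> n0 - n \<in> H)}"
proof -
  obtain e where "e \<in> E" using E(2) by blast
  then obtain N where N: "\<forall>n\<ge>N. n \<in> E" using semigroup_ideal_cofinite[OF NS E(1)] by blast
  have "n \<notin> E" if "n \<in> E" "n \<le> n0" "n0 - n \<in> H" for n
    using E(1) that socle(1) unfolding semigroup_ideal_def socle_exp_def
    by (metis le_add_diff_inverse)
  then show ?thesis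
    using below_socle_exp[OF NS N socle] E(1) unfolding semigroup_ideal_def by blast
qed

definition symmetric_frobenius :: "nat set \<Rightarrow> nat \<Rightarrow> bool" where
  "symmetric_frobenius H F \<longleftrightarrow> F \<notin> H \<and> (\<forall>x. x \<notin> H \<longrightarrow> x \<le> F \<and> F - x \<in> H)"

lemma gap_step:
  assumes NS: "numerical_semigroup H" and "x \<notin> H" "0 < h"
  shows "\<exists>k. x + k * h \<notin> H \<and> x + Suc k * h \<in> H"
proof (rule exists_least_lemma[where P = "\<lambda>k. x + k * h \<in> H"])
  obtain N where "\<forall>n\<ge>N. n \<in> H" using numerical_semigroup_cofinite[OF NS] by blast
  moreover have "N \<le> x + N * h" using \<open>0 < h\<close> by (simp add: trans_le_add2)
  ultimately show "\<exists>k. x + k * h \<in> H" by blast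
qed (use assms in simp)

lemma gorenstein_sgring_imp_symmetric:
  assumes NS: "numerical_semigroup H" and G: "gorenstein_sgring TYPE('a::field) H"
    and gap: "x0 \<notin> H"
  shows "\<exists>F. symmetric_frobenius H F"
proof -
  obtain h where h: "h \<in> H" "0 < h" "gorenstein_quot H (principal_ideal H (monom (1::'a) h))"
    using G unfolding gorenstein_sgring_def by auto
  let ?E = "(+) h ` H"
  have E: "semigroup_ideal H ?E" using semigroup_ideal_image_plus[OF NS h(1)] .
  have "gorenstein_quot H (supp_polys ?E :: 'a poly set)"
    using h(3) by (simp add: principal_ideal_monom)
  moreover have "?E \<subseteq> H" using E unfolding semigroup_ideal_def by blast
  ultimately have "\<exists>!n. socle_exp H ?E n" by (simp add: gorenstein_quot_supp_polys_iff)
  then obtain w where w: "socle_exp H ?E w" "\<And>n. socle_exp H ?E n \<Longrightarrow> n = w" by auto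
  have "h \<in> ?E" using numerical_semigroup_zero[OF NS] by force
  then obtain N where N: "\<forall>n\<ge>N. n \<in> ?E" using semigroup_ideal_cofinite[OF NS E] by blast
  have key: "x + h \<le> w \<and> w - h - x \<in> H" if x: "x \<notin> H" for x
  proof -
    obtain k where k: "x + k * h \<notin> H" "x + Suc k * h \<in> H" using gap_step[OF NS x h(2)] by blast
    then have "x + Suc k * h \<notin> ?E" by (simp add: mem_image_plus_iff)
    then have a: "x + Suc k * h \<le> w" "w - (x + Suc k * h) \<in> H"
      using below_socle_exp[OF NS N w] k(2) by blast+
    then have "w - h - x = (w - (x + Suc k * h)) + k * h" by simp
    moreover have "(w - (x + Suc k * h)) + k * h \<in> H"
      using numerical_semigroup_add[OF NS a(2) numerical_semigroup_mult[OF NS h(1)]] .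
    ultimately show ?thesis using a(1) by simp
  qed
  have "w - h \<notin> H"
    using w(1) key[OF gap] unfolding socle_exp_def mem_image_plus_iff by simp
  moreover have "x \<le> w - h \<and> w - h - x \<in> H" if "x \<notin> H" for x
    using key[OF that] by auto
  ultimately have "symmetric_frobenius H (w - h)" unfolding symmetric_frobenius_def by blast
  then show ?thesis ..
qed


lemma symmetric_frobenius_above: "symmetric_frobenius H F \<Longrightarrow> F < n \<Longrightarrow> n \<in> H"
  unfolding symmetric_frobenius_def by (meson not_le)

lemma symmetric_frobenius_mem_iff:
  assumes NS: "numerical_semigroup H" and S: "symmetric_frobenius H F" and "y \<le> F"
  shows "y \<in> H \<longleftrightarrow> F - y \<notin> H"
proof
  assume "y \<in> H"
  then show "F - y \<notin> H"
    using S \<open>y \<le> F\<close> numerical_semigroup_add[OF NS, of y "F - y"]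
    unfolding symmetric_frobenius_def by auto
qed (use S \<open>y \<le> F\<close> in \<open>auto simp: symmetric_frobenius_def\<close>)

lemma conductor_symmetric_frobenius:
  assumes "symmetric_frobenius H F"
  shows "conductor H = Suc F"
  unfolding conductor_def
proof (rule Least_equality)
  show "\<forall>m\<ge>Suc F. m \<in> H" using symmetric_frobenius_above[OF assms] by simp
  show "Suc F \<le> n" if "\<forall>m\<ge>n. m \<in> H" for n
    using that assms unfolding symmetric_frobenius_def by (meson not_less_eq_eq)
qed

text \<open>Symmetry makes \<open>x \<mapsto> F - x\<close> a bijection between the gaps and the elements of
  \<open>H\<close> below \<open>F\<close>, so the gaps are exactly half of \<open>{..F}\<close>.\<close>

lemma card_gaps_symmetric_frobenius:
  assumes NS: "numerical_semigroup H" and S: "symmetric_frobenius H F"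
  shows "2 * card (UNIV - H) = Suc F"
proof -
  have gaps: "UNIV - H \<subseteq> {..F}" using S unfolding symmetric_frobenius_def by auto
  have "(\<lambda>x. F - x) ` (UNIV - H) = {..F} \<inter> H"
  proof
    show "(\<lambda>x. F - x) ` (UNIV - H) \<subseteq> {..F} \<inter> H"
      using S unfolding symmetric_frobenius_def by auto
    show "{..F} \<inter> H \<subseteq> (\<lambda>x. F - x) ` (UNIV - H)"
    proof
      fix y assume y: "y \<in> {..F} \<inter> H"
      then have "F - y \<in> UNIV - H" using symmetric_frobenius_mem_iff[OF NS S] by auto
      moreover have "y = F - (F - y)" using y by auto
      ultimately show "y \<in> (\<lambda>x. F - x) ` (UNIV - H)" by blast
    qed
  qed
  moreover have "inj_on (\<lambda>x. F - x) (UNIV - H)"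
    unfolding inj_on_def using gaps by (metis DiffI UNIV_I atMost_iff diff_diff_cancel subsetD)
  ultimately have "card ({..F} \<inter> H) = card (UNIV - H)" using card_image by metis
  moreover have "card {..F} = card (UNIV - H) + card ({..F} \<inter> H)"
  proof -
    have "{..F} = (UNIV - H) \<union> ({..F} \<inter> H)" using gaps by auto
    moreover have "finite (UNIV - H)" using gaps finite_subset by blast
    ultimately show ?thesis by (metis card_Un_disjoint finite_Int finite_atMost Diff_disjoint inf_commute
        inf_left_commute inf_bot_right)
  qed
  ultimately show ?thesis by simp
qed

lemma sgring_mult_closed:
  assumes "numerical_semigroup H" "r \<in> sgring H" "s \<in> sgring H"
  shows "r * s \<in> sgring H"
  using assms mult_in_supp_polys[of H H H r s] numerical_semigroup_add
  unfolding sgring_eq_supp_polys by blast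

definition Rspan :: "nat set \<Rightarrow> 'a::field poly list \<Rightarrow> 'a poly set" where
  "Rspan H gs = {\<Sum>i<length gs. r i * gs ! i | r. \<forall>i<length gs. r i \<in> sgring H}"

lemma Rspan_memI:
  "\<forall>i<length gs. r i \<in> sgring H \<Longrightarrow> (\<Sum>i<length gs. r i * gs ! i) \<in> Rspan H gs"
  unfolding Rspan_def by blast

lemma mu_eq_Least_Rspan: "mu H I = (LEAST n. \<exists>gs. length gs = n \<and> I = Rspan H gs)"
proof -
  have "length gs = n \<Longrightarrow> Rspan H gs = {\<Sum>i<n. r i * gs ! i | r. \<forall>i<n. r i \<in> sgring H}"
    for gs :: "'a poly list" and n
    unfolding Rspan_def by simp
  then have "(\<exists>gs. length gs = n \<and> I = {\<Sum>i<n. r i * gs ! i | r. \<forall>i<n. r i \<in> sgring H})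
      \<longleftrightarrow> (\<exists>gs. length gs = n \<and> I = Rspan H gs)" for n
    by blast
  then show ?thesis unfolding mu_def by simp
qed

lemma mu_le_length: "I = Rspan H gs \<Longrightarrow> mu H I \<le> length gs"
  unfolding mu_eq_Least_Rspan by (rule Least_le) blast

lemma two_le_mu:
  assumes "I = Rspan H gs" and short: "\<And>gs. length gs \<le> 1 \<Longrightarrow> I \<noteq> Rspan H gs"
  shows "2 \<le> mu H I"
proof -
  have "\<exists>gs'. length gs' = mu H I \<and> I = Rspan H gs'"
    unfolding mu_eq_Least_Rspan by (rule LeastI[of _ "length gs"]) (use assms(1) in blast)
  then obtain gs' where "length gs' = mu H I" "I = Rspan H gs'" by blast
  then show ?thesis using short[of gs'] by linarith
qed

lemma Rspan_Nil: "Rspan H [] = {0}"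
  unfolding Rspan_def by auto

lemma principal_ideal_eq_Rspan: "principal_ideal H g = Rspan H [g]"
proof -
  have "r * g \<in> Rspan H [g]" if "r \<in> sgring H" for r
    using that Rspan_memI[of "[g]" "\<lambda>_. r" H] by auto
  then show ?thesis unfolding principal_ideal_def by (auto simp: Rspan_def)
qed

lemma is_Rsubmodule_Rspan:
  assumes NS: "numerical_semigroup H"
  shows "is_Rsubmodule H (Rspan H (gs :: 'a::field poly list))"
  unfolding is_Rsubmodule_def
proof (intro conjI ballI)
  have "0 \<in> sgring H" unfolding sgring_def by simp
  then show "0 \<in> Rspan H gs" using Rspan_memI[of gs "\<lambda>_. 0" H] by auto
next
  fix x y assume "x \<in> Rspan H gs" "y \<in> Rspan H gs"
  then obtain r s where r: "\<forall>i<length gs. r i \<in> sgring H" "x = (\<Sum>i<length gs. r i * gs ! i)"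
    and s: "\<forall>i<length gs. s i \<in> sgring H" "y = (\<Sum>i<length gs. s i * gs ! i)"
    unfolding Rspan_def by blast
  have "x + y = (\<Sum>i<length gs. (r i + s i) * gs ! i)"
    unfolding r(2) s(2) by (simp add: sum.distrib distrib_right)
  moreover have "\<forall>i<length gs. r i + s i \<in> sgring H"
    using r(1) s(1) by (simp add: sgring_eq_supp_polys add_in_supp_polys)
  ultimately show "x + y \<in> Rspan H gs" using Rspan_memI[of gs "\<lambda>i. r i + s i" H] by auto
next
  fix c x :: "'a poly" assume c: "c \<in> sgring H" and "x \<in> Rspan H gs"
  then obtain r where r: "\<forall>i<length gs. r i \<in> sgring H" "x = (\<Sum>i<length gs. r i * gs ! i)"
    unfolding Rspan_def by blast
  have "c * x = (\<Sum>i<length gs. (c * r i) * gs ! i)"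
    unfolding r(2) by (simp add: sum_distrib_left mult.assoc)
  moreover have "\<forall>i<length gs. c * r i \<in> sgring H"
    using r(1) c sgring_mult_closed[OF NS] by blast
  ultimately show "c * x \<in> Rspan H gs" using Rspan_memI[of gs "\<lambda>i. c * r i" H] by auto
qed

lemma mem_Rspan:
  assumes "0 \<in> H" "g \<in> set gs"
  shows "g \<in> Rspan H gs"
proof -
  obtain i where i: "i < length gs" "gs ! i = g" using assms(2) by (meson in_set_conv_nth)
  have "(\<Sum>j<length gs. (if j = i then 1 else 0) * gs ! j) = g"
    using i by (simp add: if_distrib[of "\<lambda>c. c * _"] sum.delta cong: if_cong)
  moreover have "(1 :: 'a poly) \<in> sgring H" "(0 :: 'a poly) \<in> sgring H"
    using assms(1) unfolding sgring_def by (auto simp: coeff_1)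
  ultimately show ?thesis using Rspan_memI[of gs "\<lambda>j. if j = i then 1 else 0" H] by auto
qed

lemma supp_polys_subset_Rsubmodule:
  fixes M :: "'a::field poly set"
  assumes M: "is_Rsubmodule H M" and "0 \<in> H" and monoms: "\<And>n. n \<in> E \<Longrightarrow> monom 1 n \<in> M"
  shows "supp_polys E \<subseteq> M"
proof
  fix p :: "'a poly" assume p: "p \<in> supp_polys E"
  have M_closed: "0 \<in> M" "\<forall>x\<in>M. \<forall>y\<in>M. x + y \<in> M" "\<forall>r\<in>sgring H. \<forall>x\<in>M. r * x \<in> M"
    using M unfolding is_Rsubmodule_def by auto
  show "p \<in> M"
  proof (rule poly_in_add_closed_by_monoms[OF M_closed(1,2)])
    fix n assume "coeff p n \<noteq> 0"
    then have "[:coeff p n:] * monom 1 n \<in> M"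
      using p monoms M_closed(3) const_in_sgring[OF \<open>0 \<in> H\<close>] unfolding supp_polys_def by blast
    then show "monom (coeff p n) n \<in> M" by (simp add: const_mult_monom smult_monom)
  qed
qed

lemma Rspan_subset_Rsubmodule:
  assumes "is_Rsubmodule H M" "set gs \<subseteq> M"
  shows "Rspan H gs \<subseteq> M"
proof
  fix x assume "x \<in> Rspan H gs"
  then obtain r where r: "\<forall>i<length gs. r i \<in> sgring H" "x = (\<Sum>i<length gs. r i * gs ! i)"
    unfolding Rspan_def by blast
  show "x \<in> M"
    unfolding r(2) using assms r(1) unfolding is_Rsubmodule_def
    by (intro sum_in_add_closed) (auto simp: subset_code(1))
qed

text \<open>Generators: the monomials of \<open>E\<close> up to \<open>e\<^sub>0 + N\<close>, where every exponent \<open>\<ge> N\<close>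
  lies in \<open>H\<close>; the higher monomials are multiples of \<open>t\<^sup>e\<^sup>0\<close>.\<close>

lemma supp_polys_finitely_generated:
  assumes NS: "numerical_semigroup H" and E: "semigroup_ideal H E" and e0: "e0 \<in> E"
  shows "\<exists>gs. (supp_polys E :: 'a::field poly set) = Rspan H gs"
proof -
  obtain N where N: "\<forall>n\<ge>N. n \<in> H" using numerical_semigroup_cofinite[OF NS] by blast
  define gs :: "'a poly list" where "gs = map (monom 1) (sorted_list_of_set (E \<inter> {..e0 + N}))"
  have set_gs: "set gs = monom 1 ` (E \<inter> {..e0 + N})" unfolding gs_def by simp
  have H0: "0 \<in> H" using numerical_semigroup_zero[OF NS] .
  have "supp_polys E \<subseteq> Rspan H gs"
  proof (rule supp_polys_subset_Rsubmodule[OF is_Rsubmodule_Rspan[OF NS] H0])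
    fix n assume n: "n \<in> E"
    show "monom 1 n \<in> Rspan H gs"
    proof (cases "n \<le> e0 + N")
      case True
      then have "monom 1 n \<in> set gs" using n set_gs by auto
      then show ?thesis by (rule mem_Rspan[OF H0])
    next
      case False
      then have "monom 1 (n - e0) \<in> (sgring H :: 'a poly set)"
        using N by (simp add: sgring_eq_supp_polys monom_in_supp_polys_iff)
      moreover have "monom 1 e0 \<in> set gs" using e0 set_gs by auto
      then have "monom 1 e0 \<in> Rspan H gs" by (rule mem_Rspan[OF H0])
      ultimately have "monom 1 (n - e0) * monom 1 e0 \<in> Rspan H gs"
        using is_Rsubmodule_Rspan[OF NS] unfolding is_Rsubmodule_def by blast
      then show ?thesis using False by (simp add: mult_monom)
    qed
  qed
  moreover have "Rspan H gs \<subseteq> supp_polys E"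
    using graded_ideal_supp_polys[OF E] set_gs
    unfolding graded_ideal_def is_ideal_def
    by (intro Rspan_subset_Rsubmodule) (auto simp: monom_in_supp_polys_iff)
  ultimately show ?thesis by blast
qed


lemma module_iso_refl: "module_iso H M M"
  unfolding module_iso_def by (intro exI[of _ id]) auto

lemma module_iso_trans:
  fixes M N P :: "'a::field poly set"
  assumes "module_iso H M N" "module_iso H N P"
  shows "module_iso H M P"
proof -
  obtain f g where f: "bij_betw f M N" "\<forall>x\<in>M. \<forall>y\<in>M. f (x + y) = f x + f y"
      "\<forall>r\<in>sgring H. \<forall>x\<in>M. f (r * x) = r * f x"
    and g: "bij_betw g N P" "\<forall>x\<in>N. \<forall>y\<in>N. g (x + y) = g x + g y"
      "\<forall>r\<in>sgring H. \<forall>x\<in>N. g (r * x) = r * g x"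
    using assms unfolding module_iso_def by blast
  have fM: "\<And>x. x \<in> M \<Longrightarrow> f x \<in> N" using f(1) bij_betwE by blast
  show ?thesis unfolding module_iso_def
  proof (intro exI[of _ "g \<circ> f"] conjI ballI)
    show "bij_betw (g \<circ> f) M P" using f(1) g(1) by (rule bij_betw_trans)
  qed (use f(2,3) g(2,3) fM in simp_all)
qed

lemma module_iso_sym:
  fixes M N :: "'a::field poly set"
  assumes M: "is_Rsubmodule H M" and iso: "module_iso H M N"
  shows "module_iso H N M"
proof -
  obtain f where f: "bij_betw f M N" "\<forall>x\<in>M. \<forall>y\<in>M. f (x + y) = f x + f y"
      "\<forall>r\<in>sgring H. \<forall>x\<in>M. f (r * x) = r * f x"
    using iso unfolding module_iso_def by blast
  define g where "g = inv_into M f"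
  have g: "bij_betw g N M" unfolding g_def using f(1) by (rule bij_betw_inv_into)
  have gN: "\<And>x. x \<in> N \<Longrightarrow> g x \<in> M" using g bij_betwE by blast
  have fg: "\<And>x. x \<in> N \<Longrightarrow> f (g x) = x"
    unfolding g_def using f(1) by (meson bij_betw_inv_into_right)
  have gf: "\<And>x. x \<in> M \<Longrightarrow> g (f x) = x"
    unfolding g_def using f(1) by (meson bij_betw_inv_into_left)
  have M_closed: "\<forall>x\<in>M. \<forall>y\<in>M. x + y \<in> M" "\<forall>r\<in>sgring H. \<forall>x\<in>M. r * x \<in> M"
    using M unfolding is_Rsubmodule_def by auto
  show ?thesis unfolding module_iso_def
  proof (intro exI[of _ g] conjI ballI)
    fix x y assume "x \<in> N" "y \<in> N"
    then have "g (x + y) = g (f (g x + g y))" using f(2) gN fg by simp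
    then show "g (x + y) = g x + g y" using gf M_closed gN \<open>x \<in> N\<close> \<open>y \<in> N\<close> by simp
  next
    fix r x :: "'a poly" assume "r \<in> sgring H" "x \<in> N"
    then have "g (r * x) = g (f (r * g x))" using f(3) gN fg by simp
    then show "g (r * x) = r * g x" using gf M_closed gN \<open>r \<in> sgring H\<close> \<open>x \<in> N\<close> by simp
  qed (rule g)
qed

lemma iso_class_eq:
  fixes M N :: "'a::field poly set"
  assumes "is_Rsubmodule H M" "module_iso H M N"
  shows "iso_class H M = iso_class H N"
  unfolding iso_class_def using module_iso_trans module_iso_sym[OF assms] assms(2) by blast

lemma module_iso_times_monom:
  "module_iso H (supp_polys S) (supp_polys ((+) d ` S) :: 'a::field poly set)"
  unfolding module_iso_def supp_polys_image_plus
proof (intro exI[of _ "(*) (monom 1 d)"] conjI ballI)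
  show "bij_betw ((*) (monom 1 d)) (supp_polys S) ((*) (monom 1 d) ` (supp_polys S :: 'a poly set))"
    by (rule inj_on_imp_bij_betw) (auto simp: inj_on_def)
qed (simp_all add: algebra_simps)

text \<open>An isomorphism \<open>f\<close> of monomial modules commutes with multiplication by their
  monomials, \<open>t\<^sup>e\<^sup>1 f(x) = x f(t\<^sup>e\<^sup>1)\<close>, and \<open>f(t\<^sup>e\<^sup>1)\<close> divides a monomial; so \<open>f\<close> is
  multiplication by a Laurent monomial.\<close>

lemma module_iso_supp_polys_is_monomial:
  fixes f :: "'a::field poly \<Rightarrow> 'a poly"
  assumes E1: "E1 \<subseteq> H" "e1 \<in> E1" and e2: "e2 \<in> E2"
    and f: "bij_betw f (supp_polys E1) (supp_polys E2)"
      "\<forall>r\<in>sgring H. \<forall>x\<in>supp_polys E1. f (r * x) = r * f x"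
  shows "\<exists>a k. a \<noteq> 0 \<and> (\<forall>x\<in>supp_polys E1. monom 1 e1 * f x = monom a k * x)"
proof -
  have sub: "supp_polys E1 \<subseteq> (sgring H :: 'a poly set)"
    using supp_polys_mono[OF E1(1)] unfolding sgring_eq_supp_polys .
  have x1: "monom 1 e1 \<in> supp_polys E1" using E1(2) by (simp add: monom_in_supp_polys_iff)
  have comm: "monom 1 e1 * f x = x * f (monom 1 e1)" if "x \<in> supp_polys E1" for x
    using f(2) sub that x1 by (metis mult.commute subsetD)
  have "monom 1 e2 \<in> f ` supp_polys E1"
    using f(1) e2 unfolding bij_betw_def by (simp add: monom_in_supp_polys_iff)
  then obtain y where y: "y \<in> supp_polys E1" "f y = monom 1 e2" by (metis imageE)
  have "y * f (monom 1 e1) = monom 1 (e1 + e2)" using comm[OF y(1)] y(2) by (simp add: mult_monom)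
  then obtain a k where "a \<noteq> 0" "f (monom 1 e1) = monom a k"
    using factor_of_monom[of y "f (monom 1 e1)" 1 "e1 + e2"] by auto
  then show ?thesis using comm by (metis mult.commute)
qed

lemma module_iso_supp_polys_imp_shift:
  assumes E1: "E1 \<subseteq> H" "e1 \<in> E1" and e2: "e2 \<in> E2"
    and iso: "module_iso H (supp_polys E1 :: 'a::field poly set) (supp_polys E2)"
  shows "\<exists>p q. (+) p ` E1 = (+) q ` E2"
proof -
  obtain f :: "'a poly \<Rightarrow> 'a poly" where f: "bij_betw f (supp_polys E1) (supp_polys E2)"
      "\<forall>r\<in>sgring H. \<forall>x\<in>supp_polys E1. f (r * x) = r * f x"
    using iso unfolding module_iso_def by blast
  obtain a k where a: "a \<noteq> 0" and fx: "\<And>x. x \<in> supp_polys E1 \<Longrightarrow> monom 1 e1 * f x = monom a k * x"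
    using module_iso_supp_polys_is_monomial[OF E1 e2 f] by blast
  have coeff_f: "coeff (f x) j \<noteq> 0 \<longleftrightarrow> k \<le> e1 + j \<and> coeff x (e1 + j - k) \<noteq> 0"
    if "x \<in> supp_polys E1" for x j
  proof -
    have "coeff (f x) j = coeff (monom 1 e1 * f x) (e1 + j)" by (simp add: coeff_monom_mult)
    also have "\<dots> = coeff (monom a k * x) (e1 + j)" using fx[OF that] by simp
    finally show ?thesis using a by (simp add: coeff_monom_mult)
  qed
  have "(+) e1 ` E2 \<subseteq> (+) k ` E1"
  proof
    fix n assume "n \<in> (+) e1 ` E2"
    then obtain j where j: "j \<in> E2" "n = e1 + j" by blast
    have "monom 1 j \<in> f ` supp_polys E1"
      using f(1) j(1) unfolding bij_betw_def by (simp add: monom_in_supp_polys_iff)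
    then obtain x where x: "x \<in> supp_polys E1" "f x = monom 1 j" by (metis imageE)
    then have "k \<le> n" "coeff x (n - k) \<noteq> 0" using coeff_f[OF x(1), of j] j(2) by auto
    then show "n \<in> (+) k ` E1" using x(1) unfolding supp_polys_def by (auto simp: mem_image_plus_iff)
  qed
  moreover have "(+) k ` E1 \<subseteq> (+) e1 ` E2"
  proof
    fix n assume "n \<in> (+) k ` E1"
    then obtain m where m: "m \<in> E1" "n = k + m" by blast
    have xm: "monom 1 m \<in> (supp_polys E1 :: 'a poly set)" using m(1) by (simp add: monom_in_supp_polys_iff)
    moreover have "f (monom 1 m) \<noteq> 0"
    proof
      assume "f (monom 1 m) = 0"
      then have "monom 1 e1 * f (monom 1 m) = 0" by simp
      then show False using fx[OF xm] a by (simp add: mult_monom)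
    qed
    then obtain j where "coeff (f (monom 1 m)) j \<noteq> 0" by (metis coeff_0 poly_eqI)
    moreover have "f (monom 1 m) \<in> supp_polys E2" using f(1) xm by (meson bij_betwE)
    ultimately have "j \<in> E2" "k \<le> e1 + j" "e1 + j - k = m"
      using coeff_f[OF xm, of j] unfolding supp_polys_def by (auto split: if_splits)
    then show "n \<in> (+) e1 ` E2" using m(2) by (auto simp: mem_image_plus_iff)
  qed
  ultimately show ?thesis by blast
qed

lemma image_plus_cancel:
  fixes A B :: "nat set"
  assumes "(+) p ` A = (+) q ` B" "q \<le> p"
  shows "B = (+) (p - q) ` A"
proof -
  have "(+) q ` B = (+) q ` ((+) (p - q) ` A)"
    using assms by (simp add: image_image add.assoc[symmetric])
  then show ?thesis by (simp add: inj_image_eq_iff)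
qed

lemma principal_exponents:
  assumes NS: "numerical_semigroup H" and E: "E \<noteq> {}"
    and g: "(supp_polys E :: 'a::field poly set) = principal_ideal H g"
  shows "\<exists>d. E = (+) d ` H"
proof -
  obtain e where e: "e \<in> E" using E by blast
  have "g \<noteq> 0"
  proof
    assume "g = 0"
    then have "supp_polys E = ({0} :: 'a poly set)"
      using g zero_in_supp_polys[of H] unfolding principal_ideal_def sgring_eq_supp_polys by auto
    moreover have "monom 1 e \<in> (supp_polys E :: 'a poly set)" using e by (simp add: monom_in_supp_polys_iff)
    ultimately show False by simp
  qed
  have "module_iso H (supp_polys H) (supp_polys E :: 'a poly set)"
    unfolding module_iso_def
  proof (intro exI[of _ "\<lambda>r. r * g"] conjI ballI)
    show "bij_betw (\<lambda>r. r * g) (supp_polys H) (supp_polys E)"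
      using \<open>g \<noteq> 0\<close> unfolding g principal_ideal_def sgring_eq_supp_polys
      by (intro bij_betw_imageI) (auto simp: inj_on_def)
  qed (simp_all add: distrib_right mult.assoc)
  then obtain p q where pq: "(+) p ` H = (+) q ` E"
    using module_iso_supp_polys_imp_shift[OF subset_refl numerical_semigroup_zero[OF NS] e] by blast
  moreover have "q \<le> p"
    using pq numerical_semigroup_zero[OF NS] by (metis image_eqI le_add1 add_0_right image_iff)
  ultimately show ?thesis using image_plus_cancel by blast
qed

lemma mu_supp_polys_le_one:
  assumes "E = {} \<or> E = (+) d ` H"
  shows "mu H (supp_polys E :: 'a::field poly set) \<le> 1"
proof -
  have "\<exists>gs. length gs \<le> 1 \<and> (supp_polys E :: 'a poly set) = Rspan H gs"
  proof (cases "E = {}")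
    case True
    then show ?thesis by (intro exI[of _ "[]"]) (simp add: supp_polys_empty Rspan_Nil)
  next
    case False
    then have "(supp_polys E :: 'a poly set) = Rspan H [monom 1 d]"
      using assms by (simp add: principal_ideal_monom[symmetric] principal_ideal_eq_Rspan)
    then show ?thesis by (intro exI[of _ "[monom 1 d]"]) simp
  qed
  then show ?thesis using mu_le_length order_trans by blast
qed

lemma two_le_mu_supp_polys:
  assumes NS: "numerical_semigroup H" and E: "semigroup_ideal H E" "E \<noteq> {}"
    and nonprincipal: "\<And>d. E \<noteq> (+) d ` H"
  shows "2 \<le> mu H (supp_polys E :: 'a::field poly set)"
proof -
  obtain e where e: "e \<in> E" using E(2) by blast
  then obtain gs where gs: "(supp_polys E :: 'a poly set) = Rspan H gs"
    using supp_polys_finitely_generated[OF NS E(1)] by blast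
  show ?thesis
  proof (rule two_le_mu[OF gs])
    fix gs' :: "'a poly list" assume "length gs' \<le> 1"
    then consider "gs' = []" | g where "gs' = [g]" by (cases gs') auto
    then show "supp_polys E \<noteq> Rspan H gs'"
    proof cases
      case 1
      have "monom 1 e \<in> (supp_polys E :: 'a poly set)" using e by (simp add: monom_in_supp_polys_iff)
      then show ?thesis using 1 by (auto simp: Rspan_Nil)
    next
      case (2 g)
      show ?thesis
      proof
        assume "supp_polys E = Rspan H gs'"
        then have "supp_polys E = principal_ideal H g" by (simp add: 2 principal_ideal_eq_Rspan)
        then show False using principal_exponents[OF NS E(2)] nonprincipal by blast
      qed
    qed
  qed
qed

lemma two_le_mu_supp_polys_iff:
  assumes NS: "numerical_semigroup H" and E: "semigroup_ideal H E"
  shows "2 \<le> mu H (supp_polys E :: 'a::field poly set) \<longleftrightarrow> E \<noteq> {} \<and> (\<forall>d. E \<noteq> (+) d ` H)"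
proof
  assume "2 \<le> mu H (supp_polys E :: 'a poly set)"
  then show "E \<noteq> {} \<and> (\<forall>d. E \<noteq> (+) d ` H)"
    using mu_supp_polys_le_one[of E _ H, where 'a = 'a] by fastforce
qed (use two_le_mu_supp_polys[OF NS E] in blast)

lemma supp_polys_in_X_R_iff:
  assumes NS: "numerical_semigroup H" and E: "semigroup_ideal H E"
  shows "(supp_polys E :: 'a::field poly set) \<in> X_R H
    \<longleftrightarrow> (\<exists>!n. socle_exp H E n) \<and> E \<noteq> {} \<and> (\<forall>d. E \<noteq> (+) d ` H)"
proof -
  have "E \<subseteq> H" using E unfolding semigroup_ideal_def by blast
  moreover have "graded_ideal H (supp_polys E :: 'a poly set)" using graded_ideal_supp_polys[OF E] .
  ultimately show ?thesis
    unfolding X_R_def by (simp add: gorenstein_quot_supp_polys_iff two_le_mu_supp_polys_iff[OF NS E])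
qed

lemma X_R_eq_supp_polys:
  fixes I :: "'a::field poly set"
  assumes NS: "numerical_semigroup H" and I: "I \<in> X_R H"
  shows "semigroup_ideal H (exponents I)" "I = supp_polys (exponents I)"
proof -
  have "graded_ideal H I" using I unfolding X_R_def by blast
  then show "semigroup_ideal H (exponents I)" "I = supp_polys (exponents I)"
    using semigroup_ideal_exponents graded_ideal_eq_supp_polys numerical_semigroup_zero[OF NS] by blast+
qed

definition colon_exps :: "nat set \<Rightarrow> nat \<Rightarrow> nat set" where
  "colon_exps H m = {n\<in>H. n + m \<in> H}"

lemma colon_monom_eq_supp_polys: "colon_monom H m = (supp_polys (colon_exps H m) :: 'a::field poly set)"
proof -
  have "x * monom 1 m \<in> supp_polys H \<longleftrightarrow> x \<in> supp_polys {n. n + m \<in> H}" for x :: "'a poly"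
    unfolding supp_polys_def by (auto simp: mult.commute[of x] coeff_monom_mult add.commute)
  then show ?thesis
    unfolding colon_monom_def colon_exps_def sgring_eq_supp_polys supp_polys_def by auto
qed

lemma semigroup_ideal_colon_exps:
  assumes "numerical_semigroup H"
  shows "semigroup_ideal H (colon_exps H m)"
  unfolding semigroup_ideal_def colon_exps_def
proof (intro conjI ballI)
  fix e h assume "e \<in> {n \<in> H. n + m \<in> H}" "h \<in> H"
  then have "e + h \<in> H" "(e + m) + h \<in> H" using numerical_semigroup_add[OF assms] by auto
  then show "e + h \<in> {n \<in> H. n + m \<in> H}" by (simp add: add_ac)
qed auto

lemma colon_exps_of_mem: "numerical_semigroup H \<Longrightarrow> m \<in> H \<Longrightarrow> colon_exps H m = H"
  unfolding colon_exps_def by (auto simp: numerical_semigroup_add)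

lemma colon_exps_above: "symmetric_frobenius H F \<Longrightarrow> F < n \<Longrightarrow> n \<in> colon_exps H m"
  unfolding colon_exps_def using symmetric_frobenius_above by auto

lemma frobenius_notin_colon_exps: "symmetric_frobenius H F \<Longrightarrow> F \<notin> colon_exps H m"
  unfolding colon_exps_def symmetric_frobenius_def by auto

lemma socle_exp_colon_exps_iff:
  assumes NS: "numerical_semigroup H" and S: "symmetric_frobenius H F" and m: "m \<notin> H"
  shows "socle_exp H (colon_exps H m) n \<longleftrightarrow> n = F - m"
proof
  assume n: "socle_exp H (colon_exps H m) n"
  then have n_gap: "n + m \<notin> H" and up: "\<And>k. k \<in> H \<Longrightarrow> 0 < k \<Longrightarrow> n + k + m \<in> H"
    unfolding socle_exp_def colon_exps_def by auto
  have "n + m \<le> F" "F - (n + m) \<in> H" using S n_gap unfolding symmetric_frobenius_def by auto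
  moreover have "F \<notin> H" using S unfolding symmetric_frobenius_def by blast
  ultimately show "n = F - m" using up[of "F - (n + m)"] by (cases "n + m = F") auto
next
  assume n: "n = F - m"
  have "m \<le> F" "F - m \<in> H" using S m unfolding symmetric_frobenius_def by auto
  moreover have "F - m + k \<in> colon_exps H m" if "k \<in> H" "0 < k" for k
  proof -
    have "F - m + k \<in> H" using numerical_semigroup_add[OF NS \<open>F - m \<in> H\<close> \<open>k \<in> H\<close>] .
    moreover have "F - m + k + m \<in> H"
      using symmetric_frobenius_above[OF S, of "F - m + k + m"] \<open>m \<le> F\<close> \<open>0 < k\<close> by simp
    ultimately show ?thesis unfolding colon_exps_def by blast
  qed
  moreover have "F - m \<notin> colon_exps H m"
    using S \<open>m \<le> F\<close> unfolding colon_exps_def symmetric_frobenius_def by simp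
  ultimately show "socle_exp H (colon_exps H m) n" unfolding socle_exp_def n by blast
qed

lemma colon_exps_not_principal:
  assumes NS: "numerical_semigroup H" and S: "symmetric_frobenius H F" and m: "m \<notin> H"
  shows "colon_exps H m \<noteq> (+) d ` H"
proof
  assume eq: "colon_exps H m = (+) d ` H"
  show False
  proof (cases "d = 0")
    case True
    then have "0 \<in> colon_exps H m" using eq numerical_semigroup_zero[OF NS] by simp
    then show False using m unfolding colon_exps_def by simp
  next
    case False
    then have "F + d \<in> (+) d ` H" using eq colon_exps_above[OF S, of "F + d" m] by simp
    then show False using S unfolding symmetric_frobenius_def by (auto simp: mem_image_plus_iff)
  qed
qed

lemma colon_monom_in_X_R:
  assumes NS: "numerical_semigroup H" and S: "symmetric_frobenius H F" and m: "m \<notin> H"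
  shows "(colon_monom H m :: 'a::field poly set) \<in> X_R H"
proof -
  have "\<exists>!n. socle_exp H (colon_exps H m) n" by (simp add: socle_exp_colon_exps_iff[OF NS S m])
  moreover have "colon_exps H m \<noteq> {}" using colon_exps_above[OF S, of "Suc F"] by blast
  ultimately show ?thesis
    unfolding colon_monom_eq_supp_polys
    using supp_polys_in_X_R_iff[OF NS semigroup_ideal_colon_exps[OF NS]] colon_exps_not_principal[OF NS S m]
    by blast
qed

lemma socle_complement_eq_colon_exps:
  assumes NS: "numerical_semigroup H" and S: "symmetric_frobenius H F" and "n0 \<le> F"
  shows "{n\<in>H. \<not> (n \<le> n0 \<and> n0 - n \<in> H)} = colon_exps H (F - n0)"
proof -
  have "n0 - n \<in> H \<longleftrightarrow> n + (F - n0) \<notin> H" if "n \<le> n0" for n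
    using symmetric_frobenius_mem_iff[OF NS S, of "n + (F - n0)"] that \<open>n0 \<le> F\<close>
    by (simp add: diff_diff_left)
  moreover have "n + (F - n0) \<in> H" if "\<not> n \<le> n0" for n
    using that \<open>n0 \<le> F\<close> symmetric_frobenius_above[OF S] by simp
  ultimately show ?thesis unfolding colon_exps_def by blast
qed

lemma socle_complement_eq_shifted_colon_exps:
  assumes NS: "numerical_semigroup H" and S: "symmetric_frobenius H F" and "F < n0"
  shows "{n\<in>H. \<not> (n \<le> n0 \<and> n0 - n \<in> H)} = (+) (n0 - F) ` colon_exps H (n0 - F)"
proof -
  have key: "n \<le> n0 \<and> n0 - n \<in> H \<longleftrightarrow> \<not> (n0 - F \<le> n \<and> n - (n0 - F) \<in> H)"
    if "n \<in> H" for n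
  proof (cases "n0 - F \<le> n \<and> n \<le> n0")
    case True
    then have "n - (n0 - F) \<le> F" "F - (n - (n0 - F)) = n0 - n" using \<open>F < n0\<close> by auto
    then show ?thesis using True symmetric_frobenius_mem_iff[OF NS S] by metis
  next
    case False
    then show ?thesis
      using symmetric_frobenius_above[OF S] \<open>F < n0\<close> that by (auto simp: not_le)
  qed
  moreover have "n \<in> (+) (n0 - F) ` colon_exps H (n0 - F)
      \<longleftrightarrow> n \<in> H \<and> n0 - F \<le> n \<and> n - (n0 - F) \<in> H" for n
    by (auto simp: mem_image_plus_iff colon_exps_def)
  ultimately show ?thesis by (intro set_eqI) blast
qed

lemma gorenstein_exponents_eq_shifted_colon_exps:
  assumes NS: "numerical_semigroup H" and S: "symmetric_frobenius H F"
    and E: "semigroup_ideal H E" "E \<noteq> {}" and socle: "\<exists>!n. socle_exp H E n"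
    and nonprincipal: "\<And>d. E \<noteq> (+) d ` H"
  shows "\<exists>m d. m \<notin> H \<and> E = (+) d ` colon_exps H m"
proof -
  from socle obtain n0 where n0: "socle_exp H E n0" "\<And>n. socle_exp H E n \<Longrightarrow> n = n0"
    by (elim ex1E) blast
  have E_eq: "E = {n\<in>H. \<not> (n \<le> n0 \<and> n0 - n \<in> H)}"
    using semigroup_ideal_eq_socle_complement[OF NS E n0] .
  obtain m d where E_md: "E = (+) d ` colon_exps H m"
  proof (cases "n0 \<le> F")
    case True
    then have "E = (+) 0 ` colon_exps H (F - n0)"
      using E_eq socle_complement_eq_colon_exps[OF NS S] by simp
    then show ?thesis by (rule that)
  next
    case False
    then have "E = (+) (n0 - F) ` colon_exps H (n0 - F)"
      using E_eq socle_complement_eq_shifted_colon_exps[OF NS S] by simp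
    then show ?thesis by (rule that)
  qed
  moreover have "m \<notin> H"
  proof
    assume "m \<in> H"
    then have "E = (+) d ` H" using E_md colon_exps_of_mem[OF NS] by simp
    then show False using nonprincipal by blast
  qed
  ultimately show ?thesis by blast
qed

lemma X_R_iso_colon_monom:
  fixes I :: "'a::field poly set"
  assumes NS: "numerical_semigroup H" and S: "symmetric_frobenius H F" and I: "I \<in> X_R H"
  shows "\<exists>m. m \<notin> H \<and> iso_class H I = iso_class H (colon_monom H m)"
proof -
  define E where "E = exponents I"
  have E: "semigroup_ideal H E" and I_eq: "I = supp_polys E"
    unfolding E_def using X_R_eq_supp_polys[OF NS I] by blast+
  then have "(\<exists>!n. socle_exp H E n) \<and> E \<noteq> {} \<and> (\<forall>d. E \<noteq> (+) d ` H)"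
    using I supp_polys_in_X_R_iff[OF NS E, where 'a = 'a] by simp
  then obtain m d where m: "m \<notin> H" and E_md: "E = (+) d ` colon_exps H m"
    using gorenstein_exponents_eq_shifted_colon_exps[OF NS S E] by blast
  have "iso_class H (colon_monom H m) = iso_class H I"
  proof (rule iso_class_eq)
    show "is_Rsubmodule H (colon_monom H m :: 'a poly set)"
      using graded_ideal_supp_polys[OF semigroup_ideal_colon_exps[OF NS]]
      unfolding colon_monom_eq_supp_polys graded_ideal_def is_ideal_def by blast
    show "module_iso H (colon_monom H m) I"
      unfolding I_eq E_md colon_monom_eq_supp_polys by (rule module_iso_times_monom)
  qed
  then show ?thesis using m by metis
qed

text \<open>Both sets have Frobenius number \<open>F\<close>, and shifting moves the Frobenius number.\<close>

lemma image_plus_eq_imp_eq: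
  fixes A B :: "nat set"
  assumes A: "F \<notin> A" "\<forall>n>F. n \<in> A" and B: "F \<notin> B" "\<forall>n>F. n \<in> B"
    and eq: "(+) p ` A = (+) q ` B"
  shows "A = B"
proof -
  have "Y = X"
    if XY: "(+) p ` X = (+) q ` Y" "q \<le> p" "F \<notin> X" "\<forall>n>F. n \<in> Y" for X Y :: "nat set" and p q
  proof -
    have Y: "Y = (+) (p - q) ` X" using image_plus_cancel[OF XY(1,2)] .
    have "p = q"
    proof (rule ccontr)
      assume "p \<noteq> q"
      then have "F + (p - q) \<in> Y" using XY(2,4) by simp
      then show False using Y XY(3) by (auto simp: mem_image_plus_iff)
    qed
    then show ?thesis using Y by simp
  qed
  then show ?thesis using A B eq by (metis nat_le_linear)
qed

lemma colon_exps_inj: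
  assumes S: "symmetric_frobenius H F" and m: "m1 \<notin> H" "m2 \<notin> H"
    and eq: "colon_exps H m1 = colon_exps H m2"
  shows "m1 = m2"
proof -
  have "a \<le> b" if a: "a \<notin> H" and b: "b \<notin> H" and ab: "colon_exps H a = colon_exps H b" for a b
  proof -
    have b_le: "b \<le> F" "F - b \<in> H" using S b unfolding symmetric_frobenius_def by auto
    then have "F - b \<notin> colon_exps H b" using S unfolding colon_exps_def symmetric_frobenius_def by auto
    then have "F - b \<notin> colon_exps H a" using ab by simp
    then have "F - b + a \<notin> H" using b_le(2) unfolding colon_exps_def by simp
    then have "F - b + a \<le> F" using symmetric_frobenius_above[OF S] by (meson not_le)
    then show "a \<le> b" using b_le(1) by simp
  qed
  then show ?thesis using m eq by (metis le_antisym)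
qed

lemma iso_class_colon_monom_inj:
  assumes NS: "numerical_semigroup H" and S: "symmetric_frobenius H F" and m: "m1 \<notin> H" "m2 \<notin> H"
    and eq: "iso_class H (colon_monom H m1 :: 'a::field poly set) = iso_class H (colon_monom H m2)"
  shows "m1 = m2"
proof -
  have "is_Rsubmodule H (colon_monom H m2 :: 'a poly set)"
    using graded_ideal_supp_polys[OF semigroup_ideal_colon_exps[OF NS]]
    unfolding colon_monom_eq_supp_polys graded_ideal_def is_ideal_def by blast
  then have "colon_monom H m2 \<in> iso_class H (colon_monom H m2 :: 'a poly set)"
    unfolding iso_class_def using module_iso_refl by blast
  then have "module_iso H (supp_polys (colon_exps H m1) :: 'a poly set) (supp_polys (colon_exps H m2))"
    using eq unfolding iso_class_def colon_monom_eq_supp_polys by blast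
  moreover have "Suc F \<in> colon_exps H m1" "Suc F \<in> colon_exps H m2" using colon_exps_above[OF S] by auto
  ultimately obtain p q where "(+) p ` colon_exps H m1 = (+) q ` colon_exps H m2"
    using module_iso_supp_polys_imp_shift semigroup_ideal_colon_exps[OF NS]
    unfolding semigroup_ideal_def by metis
  then have "colon_exps H m1 = colon_exps H m2"
    using image_plus_eq_imp_eq frobenius_notin_colon_exps[OF S] colon_exps_above[OF S] by metis
  then show ?thesis using colon_exps_inj[OF S m] by blast
qed

lemma iso_class_image_X_R:
  assumes NS: "numerical_semigroup H" and S: "symmetric_frobenius H F"
  shows "iso_class H ` (X_R H :: 'a::field poly set set)
    = iso_class H ` {colon_monom H m | m. m \<notin> H}"
proof
  show "iso_class H ` (X_R H :: 'a poly set set) \<subseteq> iso_class H ` {colon_monom H m | m. m \<notin> H}"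
  proof
    fix c assume "c \<in> iso_class H ` (X_R H :: 'a poly set set)"
    then obtain I :: "'a poly set" where I: "I \<in> X_R H" "c = iso_class H I" by blast
    then obtain m where "m \<notin> H" "c = iso_class H (colon_monom H m)"
      using X_R_iso_colon_monom[OF NS S I(1)] by blast
    then show "c \<in> iso_class H ` {colon_monom H m | m. m \<notin> H}" by blast
  qed
  have "{colon_monom H m | m. m \<notin> H} \<subseteq> (X_R H :: 'a poly set set)"
    using colon_monom_in_X_R[OF NS S] by blast
  then show "iso_class H ` {colon_monom H m | m. m \<notin> H} \<subseteq> iso_class H ` (X_R H :: 'a poly set set)"
    by (rule image_mono)
qed

lemma X_R_UNIV: "(X_R UNIV :: 'a::field poly set set) = {}"
proof -
  have NS: "numerical_semigroup UNIV" unfolding numerical_semigroup_def by simp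
  have "I \<notin> X_R UNIV" for I :: "'a poly set"
  proof
    assume I: "I \<in> X_R UNIV"
    define E where "E = exponents I"
    have E: "semigroup_ideal UNIV E" and I_eq: "I = supp_polys E"
      unfolding E_def using X_R_eq_supp_polys[OF NS I] by blast+
    then have nonempty: "E \<noteq> {}" and nonprincipal: "\<And>d. E \<noteq> (+) d ` UNIV"
      using I supp_polys_in_X_R_iff[OF NS E, where 'a = 'a] by simp_all
    define d where "d = (LEAST n. n \<in> E)"
    have "d \<in> E" "\<And>n. n \<in> E \<Longrightarrow> d \<le> n"
      unfolding d_def using nonempty by (auto intro: LeastI Least_le)
    then have "E = (+) d ` UNIV"
      using E unfolding semigroup_ideal_def by (auto simp: mem_image_plus_iff)
    then show False using nonprincipal by blast
  qed
  then show ?thesis by blast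
qed

theorem corollary4p6:
  fixes H :: "nat set"
  assumes "numerical_semigroup H"
    and "gorenstein_sgring TYPE('a::field) H"
  shows "iso_class H ` (X_R H :: 'a poly set set)
           = iso_class H ` {colon_monom H m | m. m \<notin> H}
     \<and> real (card (iso_class H ` (X_R H :: 'a poly set set))) = real (conductor H) / 2"
proof (cases "H = UNIV")
  case True
  have "conductor H = 0" unfolding conductor_def True by simp
  then show ?thesis using True by (simp add: X_R_UNIV)
next
  case False
  then obtain F where S: "symmetric_frobenius H F"
    using gorenstein_sgring_imp_symmetric[OF assms] by blast
  note classes = iso_class_image_X_R[OF assms(1) S, where 'a = 'a]
  have "inj_on (\<lambda>m. iso_class H (colon_monom H m :: 'a poly set)) (UNIV - H)"
    using iso_class_colon_monom_inj[OF assms(1) S] by (auto simp: inj_on_def)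
  moreover have "iso_class H ` {colon_monom H m | m. m \<notin> H}
      = (\<lambda>m. iso_class H (colon_monom H m :: 'a poly set)) ` (UNIV - H)"
    by blast
  ultimately have "card (iso_class H ` (X_R H :: 'a poly set set)) = card (UNIV - H)"
    by (simp add: classes card_image)
  then show ?thesis
    using classes card_gaps_symmetric_frobenius[OF assms(1) S] conductor_symmetric_frobenius[OF S]
    by simp
qed

end
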